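(* Let $H$ be a Hopf algebra, $E$ an $H$-comodule algebra, and $T$ an $(H,E)$-Hopf torsor. Then $T^\bullet=T^\times$.
   Context: An $H$-comodule algebra is an algebra $E$ with coaction $\Delta_E:E\to E\otimes H$ that is an algebra morphism. An $(H,E)$-Hopf module is a right $E$-module $T$ with a right $H$-coaction $\Delta_T$ such that $\Delta_T(tx)=\Delta_T(t)\Delta_E(x)$. For a right module $T$ over an algebra $A$ and $u\in T$, $\vartheta_u:A\to T$, $x\mapsto ux$, and $T^\times=\{u:\vartheta_u\text{ bijective}\}$; this applies to $T$ over $E$ and to $T\otimes H$ over $E\otimes H$. $T^\bullet=\{u\in T^\times:\Delta_T(u)\in(T\otimes H)^\times\}$. An $(H,E)$-Hopf torsor is an $(H,E)$-Hopf module $T$ with $T^\bullet\neq\emptyset$. *)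

theory Defs
  imports Complex_Main
begin

text \<open>An element of the tensor product
V (x) W is represented by a finite list of pairs [(v_1,w_1),...,(v_n,w_n)],
standing for sum_i v_i (x) w_i.  Two representatives denote the same tensor iff
every bilinear form V x W -> k takes the same total value on them (over a field,
linear functionals separate the points of V (x) W, and linear functionals on
V (x) W are exactly the bilinear forms).  Triple tensors are treated likewise
with trilinear forms.\<close>

definition bilinear_form ::
  "('k::field \<Rightarrow> 'a::ab_group_add \<Rightarrow> 'a) \<Rightarrow> ('k \<Rightarrow> 'b::ab_group_add \<Rightarrow> 'b)
    \<Rightarrow> ('a \<Rightarrow> 'b \<Rightarrow> 'k) \<Rightarrow> bool" where
  "bilinear_form s1 s2 \<beta> \<longleftrightarrow>
     (\<forall>y. Vector_Spaces.linear s1 (*) (\<lambda>x. \<beta> x y)) \<and>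
     (\<forall>x. Vector_Spaces.linear s2 (*) (\<lambda>y. \<beta> x y))"

definition trilinear_form ::
  "('k::field \<Rightarrow> 'a::ab_group_add \<Rightarrow> 'a) \<Rightarrow> ('k \<Rightarrow> 'b::ab_group_add \<Rightarrow> 'b)
    \<Rightarrow> ('k \<Rightarrow> 'c::ab_group_add \<Rightarrow> 'c) \<Rightarrow> ('a \<Rightarrow> 'b \<Rightarrow> 'c \<Rightarrow> 'k) \<Rightarrow> bool" where
  "trilinear_form s1 s2 s3 \<tau> \<longleftrightarrow>
     (\<forall>y z. Vector_Spaces.linear s1 (*) (\<lambda>x. \<tau> x y z)) \<and>
     (\<forall>x z. Vector_Spaces.linear s2 (*) (\<lambda>y. \<tau> x y z)) \<and>
     (\<forall>x y. Vector_Spaces.linear s3 (*) (\<lambda>z. \<tau> x y z))"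

definition tensor_eq2 ::
  "('k::field \<Rightarrow> 'a::ab_group_add \<Rightarrow> 'a) \<Rightarrow> ('k \<Rightarrow> 'b::ab_group_add \<Rightarrow> 'b)
    \<Rightarrow> ('a \<times> 'b) list \<Rightarrow> ('a \<times> 'b) list \<Rightarrow> bool" where
  "tensor_eq2 s1 s2 xs ys \<longleftrightarrow>
     (\<forall>\<beta>. bilinear_form s1 s2 \<beta> \<longrightarrow>
        sum_list (map (\<lambda>(a,b). \<beta> a b) xs) = sum_list (map (\<lambda>(a,b). \<beta> a b) ys))"

definition tensor_eq3 ::
  "('k::field \<Rightarrow> 'a::ab_group_add \<Rightarrow> 'a) \<Rightarrow> ('k \<Rightarrow> 'b::ab_group_add \<Rightarrow> 'b)
    \<Rightarrow> ('k \<Rightarrow> 'c::ab_group_add \<Rightarrow> 'c)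
    \<Rightarrow> ('a \<times> 'b \<times> 'c) list \<Rightarrow> ('a \<times> 'b \<times> 'c) list \<Rightarrow> bool" where
  "tensor_eq3 s1 s2 s3 xs ys \<longleftrightarrow>
     (\<forall>\<tau>. trilinear_form s1 s2 s3 \<tau> \<longrightarrow>
        sum_list (map (\<lambda>(a,b,c). \<tau> a b c) xs) = sum_list (map (\<lambda>(a,b,c). \<tau> a b c) ys))"

definition tensor_mult ::
  "('a \<Rightarrow> 'c \<Rightarrow> 'a) \<Rightarrow> ('a \<times> 'b::times) list \<Rightarrow> ('c \<times> 'b) list \<Rightarrow> ('a \<times> 'b) list" where
  "tensor_mult act xs ys = concat (map (\<lambda>(a,b). map (\<lambda>(c,d). (act a c, b * d)) ys) xs)"

definition tensor_map_left ::
  "('a \<Rightarrow> ('a1 \<times> 'a2) list) \<Rightarrow> ('a \<times> 'b) list \<Rightarrow> ('a1 \<times> 'a2 \<times> 'b) list" where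
  "tensor_map_left f xs = concat (map (\<lambda>(a,b). map (\<lambda>(a1,a2). (a1,a2,b)) (f a)) xs)"

definition tensor_map_right ::
  "('b \<Rightarrow> ('b1 \<times> 'b2) list) \<Rightarrow> ('a \<times> 'b) list \<Rightarrow> ('a \<times> 'b1 \<times> 'b2) list" where
  "tensor_map_right g xs = concat (map (\<lambda>(a,b). map (\<lambda>(b1,b2). (a,b1,b2)) (g b)) xs)"

definition tensor_valued_linear ::
  "('k::field \<Rightarrow> 'v::ab_group_add \<Rightarrow> 'v) \<Rightarrow> ('k \<Rightarrow> 'a::ab_group_add \<Rightarrow> 'a)
    \<Rightarrow> ('k \<Rightarrow> 'b::ab_group_add \<Rightarrow> 'b) \<Rightarrow> ('v \<Rightarrow> ('a \<times> 'b) list) \<Rightarrow> bool" where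
  "tensor_valued_linear s s1 s2 f \<longleftrightarrow>
     (\<forall>x y. tensor_eq2 s1 s2 (f (x + y)) (f x @ f y)) \<and>
     (\<forall>c x. tensor_eq2 s1 s2 (f (s c x)) (map (\<lambda>(a,b). (s1 c a, b)) (f x)))"

definition k_algebra :: "('k::field \<Rightarrow> 'a::ring_1 \<Rightarrow> 'a) \<Rightarrow> bool" where
  "k_algebra s \<longleftrightarrow> vector_space s \<and>
     (\<forall>c x y. s c (x * y) = s c x * y \<and> s c (x * y) = x * s c y)"

definition hopf_algebra ::
  "('k::field \<Rightarrow> 'h::ring_1 \<Rightarrow> 'h) \<Rightarrow> ('h \<Rightarrow> ('h \<times> 'h) list) \<Rightarrow> ('h \<Rightarrow> 'k) \<Rightarrow> bool" where
  "hopf_algebra s \<Delta> \<epsilon> \<longleftrightarrow>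
     k_algebra s \<and>
     \<comment> \<open>coalgebra\<close>
     tensor_valued_linear s s s \<Delta> \<and>
     Vector_Spaces.linear s (*) \<epsilon> \<and>
     (\<forall>h. tensor_eq3 s s s (tensor_map_left \<Delta> (\<Delta> h)) (tensor_map_right \<Delta> (\<Delta> h))) \<and>
     (\<forall>h. sum_list (map (\<lambda>(a,b). s (\<epsilon> a) b) (\<Delta> h)) = h) \<and>
     (\<forall>h. sum_list (map (\<lambda>(a,b). s (\<epsilon> b) a) (\<Delta> h)) = h) \<and>
     \<comment> \<open>bialgebra: \<Delta> and \<epsilon> are algebra morphisms\<close>
     (\<forall>x y. tensor_eq2 s s (\<Delta> (x * y)) (tensor_mult (*) (\<Delta> x) (\<Delta> y))) \<and>
     tensor_eq2 s s (\<Delta> 1) [(1, 1)] \<and>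
     (\<forall>x y. \<epsilon> (x * y) = \<epsilon> x * \<epsilon> y) \<and> \<epsilon> 1 = 1 \<and>
     \<comment> \<open>existence of an antipode\<close>
     (\<exists>S. Vector_Spaces.linear s s S \<and>
        (\<forall>h. sum_list (map (\<lambda>(a,b). S a * b) (\<Delta> h)) = s (\<epsilon> h) 1) \<and>
        (\<forall>h. sum_list (map (\<lambda>(a,b). a * S b) (\<Delta> h)) = s (\<epsilon> h) 1))"

definition right_comodule ::
  "('k::field \<Rightarrow> 'h::ring_1 \<Rightarrow> 'h) \<Rightarrow> ('h \<Rightarrow> ('h \<times> 'h) list) \<Rightarrow> ('h \<Rightarrow> 'k)
    \<Rightarrow> ('k \<Rightarrow> 'v::ab_group_add \<Rightarrow> 'v) \<Rightarrow> ('v \<Rightarrow> ('v \<times> 'h) list) \<Rightarrow> bool" where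
  "right_comodule sH \<Delta> \<epsilon> sV \<Delta>V \<longleftrightarrow>
     vector_space sV \<and>
     tensor_valued_linear sV sV sH \<Delta>V \<and>
     (\<forall>v. tensor_eq3 sV sH sH (tensor_map_left \<Delta>V (\<Delta>V v)) (tensor_map_right \<Delta> (\<Delta>V v))) \<and>
     (\<forall>v. sum_list (map (\<lambda>(a,b). sV (\<epsilon> b) a) (\<Delta>V v)) = v)"

definition comodule_algebra ::
  "('k::field \<Rightarrow> 'h::ring_1 \<Rightarrow> 'h) \<Rightarrow> ('h \<Rightarrow> ('h \<times> 'h) list) \<Rightarrow> ('h \<Rightarrow> 'k)
    \<Rightarrow> ('k \<Rightarrow> 'e::ring_1 \<Rightarrow> 'e) \<Rightarrow> ('e \<Rightarrow> ('e \<times> 'h) list) \<Rightarrow> bool" where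
  "comodule_algebra sH \<Delta> \<epsilon> sE \<Delta>E \<longleftrightarrow>
     k_algebra sE \<and> right_comodule sH \<Delta> \<epsilon> sE \<Delta>E \<and>
     (\<forall>x y. tensor_eq2 sE sH (\<Delta>E (x * y)) (tensor_mult (*) (\<Delta>E x) (\<Delta>E y))) \<and>
     tensor_eq2 sE sH (\<Delta>E 1) [(1, 1)]"

definition right_module ::
  "('k::field \<Rightarrow> 'e::ring_1 \<Rightarrow> 'e) \<Rightarrow> ('k \<Rightarrow> 't::ab_group_add \<Rightarrow> 't)
    \<Rightarrow> ('t \<Rightarrow> 'e \<Rightarrow> 't) \<Rightarrow> bool" where
  "right_module sE sT act \<longleftrightarrow>
     vector_space sT \<and>
     (\<forall>t. Vector_Spaces.linear sE sT (act t)) \<and>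
     (\<forall>x. Vector_Spaces.linear sT sT (\<lambda>t. act t x)) \<and>
     (\<forall>t. act t 1 = t) \<and>
     (\<forall>t x y. act (act t x) y = act t (x * y))"

definition hopf_module ::
  "('k::field \<Rightarrow> 'h::ring_1 \<Rightarrow> 'h) \<Rightarrow> ('h \<Rightarrow> ('h \<times> 'h) list) \<Rightarrow> ('h \<Rightarrow> 'k)
    \<Rightarrow> ('k \<Rightarrow> 'e::ring_1 \<Rightarrow> 'e) \<Rightarrow> ('e \<Rightarrow> ('e \<times> 'h) list)
    \<Rightarrow> ('k \<Rightarrow> 't::ab_group_add \<Rightarrow> 't) \<Rightarrow> ('t \<Rightarrow> 'e \<Rightarrow> 't) \<Rightarrow> ('t \<Rightarrow> ('t \<times> 'h) list) \<Rightarrow> bool" where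
  "hopf_module sH \<Delta> \<epsilon> sE \<Delta>E sT act \<Delta>T \<longleftrightarrow>
     right_module sE sT act \<and> right_comodule sH \<Delta> \<epsilon> sT \<Delta>T \<and>
     (\<forall>t x. tensor_eq2 sT sH (\<Delta>T (act t x)) (tensor_mult act (\<Delta>T t) (\<Delta>E x)))"

definition module_units :: "('t \<Rightarrow> 'e \<Rightarrow> 't) \<Rightarrow> 't set" where
  "module_units act = {u. bij (\<lambda>x. act u x)}"

text \<open>(T (x) H)^x: w such that \<vartheta>_w : E (x) H -> T (x) H, x |-> w x, is bijective
  (as a map between tensor products, i.e. on equivalence classes of representatives).\<close>
definition tensor_module_units ::
  "('k::field \<Rightarrow> 'e::ring_1 \<Rightarrow> 'e) \<Rightarrow> ('k \<Rightarrow> 'h::ring_1 \<Rightarrow> 'h) \<Rightarrow> ('k \<Rightarrow> 't::ab_group_add \<Rightarrow> 't)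
    \<Rightarrow> ('t \<Rightarrow> 'e \<Rightarrow> 't) \<Rightarrow> ('t \<times> 'h) list set" where
  "tensor_module_units sE sH sT act =
     {w. (\<forall>z. \<exists>x. tensor_eq2 sT sH (tensor_mult act w x) z) \<and>
         (\<forall>x y. tensor_eq2 sT sH (tensor_mult act w x) (tensor_mult act w y)
                  \<longrightarrow> tensor_eq2 sE sH x y)}"

definition bullet_units ::
  "('k::field \<Rightarrow> 'e::ring_1 \<Rightarrow> 'e) \<Rightarrow> ('k \<Rightarrow> 'h::ring_1 \<Rightarrow> 'h) \<Rightarrow> ('k \<Rightarrow> 't::ab_group_add \<Rightarrow> 't)
    \<Rightarrow> ('t \<Rightarrow> 'e \<Rightarrow> 't) \<Rightarrow> ('t \<Rightarrow> ('t \<times> 'h) list) \<Rightarrow> 't set" where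
  "bullet_units sE sH sT act \<Delta>T =
     {u \<in> module_units act. \<Delta>T u \<in> tensor_module_units sE sH sT act}"

definition hopf_torsor ::
  "('k::field \<Rightarrow> 'h::ring_1 \<Rightarrow> 'h) \<Rightarrow> ('h \<Rightarrow> ('h \<times> 'h) list) \<Rightarrow> ('h \<Rightarrow> 'k)
    \<Rightarrow> ('k \<Rightarrow> 'e::ring_1 \<Rightarrow> 'e) \<Rightarrow> ('e \<Rightarrow> ('e \<times> 'h) list)
    \<Rightarrow> ('k \<Rightarrow> 't::ab_group_add \<Rightarrow> 't) \<Rightarrow> ('t \<Rightarrow> 'e \<Rightarrow> 't) \<Rightarrow> ('t \<Rightarrow> ('t \<times> 'h) list) \<Rightarrow> bool" where
  "hopf_torsor sH \<Delta> \<epsilon> sE \<Delta>E sT act \<Delta>T \<longleftrightarrow>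
     hopf_module sH \<Delta> \<epsilon> sE \<Delta>E sT act \<Delta>T \<and> bullet_units sE sH sT act \<Delta>T \<noteq> {}"

end

theory Submission
  imports Defs
begin

text \<open>
  Fix a witness u0 \<in> T^\<bullet> of the torsor property and let u \<in> T^\<times>.
  Since \<vartheta>_u0 and \<vartheta>_u are bijective, u = u0 x and u0 = u y for some x, y \<in> E,
  and then x y = y x = 1, i.e. x is a unit of E.  As \<Delta>_E is multiplicative and
  unital, \<Delta>_E x is a unit of E \<otimes> H with inverse \<Delta>_E y, and the Hopf module axiom
  gives \<Delta>_T u = \<Delta>_T u0 \<cdot> \<Delta>_E x.  Hence \<vartheta>_{\<Delta>_T u} is \<vartheta>_{\<Delta>_T u0} composed with
  left multiplication by the unit \<Delta>_E x, a composite of bijections, so u \<in> T^\<bullet>.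
\<close>

lemma field_self_vector_space: "vector_space ((*) :: 'k::field \<Rightarrow> 'k \<Rightarrow> 'k)"
  by unfold_locales (simp_all add: algebra_simps)

lemma tensor_eq2_sym: "tensor_eq2 s1 s2 x y \<Longrightarrow> tensor_eq2 s1 s2 y x"
  by (simp add: tensor_eq2_def)

lemma tensor_eq2_trans:
  "tensor_eq2 s1 s2 x y \<Longrightarrow> tensor_eq2 s1 s2 y z \<Longrightarrow> tensor_eq2 s1 s2 x z"
  by (simp add: tensor_eq2_def)

lemma linear_sum_list:
  fixes s :: "'k::field \<Rightarrow> 'v::ab_group_add \<Rightarrow> 'v"
  assumes "vector_space s" and "\<forall>i\<in>set xs. Vector_Spaces.linear s (*) (f i)"
  shows "Vector_Spaces.linear s (*) (\<lambda>v. sum_list (map (\<lambda>i. f i v) xs))"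
  using assms(2)
proof (induction xs)
  case Nil
  then show ?case
    using assms(1) field_self_vector_space by (simp add: Vector_Spaces.linear_iff)
next
  case (Cons a xs)
  then have "Vector_Spaces.linear s (*) (f a)"
    and "Vector_Spaces.linear s (*) (\<lambda>v. sum_list (map (\<lambda>i. f i v) xs))"
    by auto
  then show ?case by (simp add: Vector_Spaces.linear_iff algebra_simps)
qed

lemma linear_comp:
  "Vector_Spaces.linear s1 s2 f \<Longrightarrow> Vector_Spaces.linear s2 s3 g
    \<Longrightarrow> Vector_Spaces.linear s1 s3 (\<lambda>x. g (f x))"
  using Vector_Spaces.linear_compose[of s1 s2 f s3 g] by (simp add: o_def)

lemma k_algebra_mult_linear:
  assumes "k_algebra s"
  shows "Vector_Spaces.linear s s (\<lambda>h. h * d)" "Vector_Spaces.linear s s (\<lambda>h. g * h)"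
proof -
  have v: "vector_space s"
    and m: "\<forall>c x y. s c (x * y) = s c x * y \<and> s c (x * y) = x * s c y"
    using assms unfolding k_algebra_def by blast+
  show "Vector_Spaces.linear s s (\<lambda>h. h * d)"
    by (simp add: Vector_Spaces.linear_iff v distrib_right, metis m)
  show "Vector_Spaces.linear s s (\<lambda>h. g * h)"
    by (simp add: Vector_Spaces.linear_iff v distrib_left, metis m)
qed

lemma sum_tensor_mult_left:
  "sum_list (map (\<lambda>(a,b). \<beta> a b) (tensor_mult act w x)) =
   sum_list (map (\<lambda>(t,h). sum_list (map (\<lambda>(c,d). \<beta> (act t c) (h * d)) x)) w)"
  by (induction w) (auto simp: tensor_mult_def o_def case_prod_unfold)

lemma sum_list_swap:
  fixes g :: "'a \<Rightarrow> 'b \<Rightarrow> 'r::comm_monoid_add"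
  shows "sum_list (map (\<lambda>a. sum_list (map (g a) ys)) xs) =
         sum_list (map (\<lambda>b. sum_list (map (\<lambda>a. g a b) xs)) ys)"
proof (induction xs)
  case Nil
  then show ?case by (induction ys) auto
next
  case (Cons a xs)
  then show ?case
    by (simp add: sum_list_addf[of "g a" "\<lambda>b. sum_list (map (\<lambda>a. g a b) xs)" ys])
qed

lemma sum_tensor_mult_right:
  fixes \<beta> :: "'a \<Rightarrow> 'b::times \<Rightarrow> 'r::comm_monoid_add"
  shows "sum_list (map (\<lambda>(a,b). \<beta> a b) (tensor_mult act w x)) =
         sum_list (map (\<lambda>(c,d). sum_list (map (\<lambda>(t,h). \<beta> (act t c) (h * d)) w)) x)"
  unfolding sum_tensor_mult_left
  using sum_list_swap[of "\<lambda>(t,h) (c,d). \<beta> (act t c) (h * d)" x w]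
  by (simp add: case_prod_unfold)

text \<open>The product of tensors is well defined on equivalence classes: replacing the
  left factor by an equal tensor does not change the product, because a bilinear
  form composed with right multiplication by a fixed tensor is again bilinear.\<close>
lemma tensor_mult_cong_left:
  fixes s1 :: "'k::field \<Rightarrow> 'a::ab_group_add \<Rightarrow> 'a" and s2 :: "'k \<Rightarrow> 'b::ring_1 \<Rightarrow> 'b"
    and act :: "'a \<Rightarrow> 'c \<Rightarrow> 'a"
  assumes vs: "vector_space s1" "vector_space s2"
    and act_lin: "\<forall>c. Vector_Spaces.linear s1 s1 (\<lambda>t. act t c)"
    and mult_lin: "\<forall>d. Vector_Spaces.linear s2 s2 (\<lambda>h. h * d)"
    and eq: "tensor_eq2 s1 s2 w w'"
  shows "tensor_eq2 s1 s2 (tensor_mult act w x) (tensor_mult act w' x)"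
  unfolding tensor_eq2_def
proof (intro allI impI)
  fix \<beta> :: "'a \<Rightarrow> 'b \<Rightarrow> 'k"
  assume \<beta>: "bilinear_form s1 s2 \<beta>"
  define \<beta>' where "\<beta>' t h = sum_list (map (\<lambda>(c,d). \<beta> (act t c) (h * d)) x)" for t h
  have "bilinear_form s1 s2 \<beta>'"
    unfolding bilinear_form_def \<beta>'_def
  proof (intro conjI allI)
    fix h
    show "Vector_Spaces.linear s1 (*) (\<lambda>t. sum_list (map (\<lambda>(c,d). \<beta> (act t c) (h * d)) x))"
      using linear_sum_list[OF vs(1), of x "\<lambda>(c,d) t. \<beta> (act t c) (h * d)"]
        linear_comp[OF act_lin[rule_format], of _ "\<lambda>v. \<beta> v _"] \<beta>
      by (auto simp: case_prod_unfold bilinear_form_def)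
  next
    fix t
    show "Vector_Spaces.linear s2 (*) (\<lambda>h. sum_list (map (\<lambda>(c,d). \<beta> (act t c) (h * d)) x))"
      using linear_sum_list[OF vs(2), of x "\<lambda>(c,d) h. \<beta> (act t c) (h * d)"]
        linear_comp[OF mult_lin[rule_format], of _ "\<lambda>v. \<beta> _ v"] \<beta>
      by (auto simp: case_prod_unfold bilinear_form_def)
  qed
  then show "sum_list (map (\<lambda>(a,b). \<beta> a b) (tensor_mult act w x)) =
             sum_list (map (\<lambda>(a,b). \<beta> a b) (tensor_mult act w' x))"
    using eq unfolding sum_tensor_mult_left tensor_eq2_def \<beta>'_def by blast
qed

lemma tensor_mult_cong_right:
  fixes s1 :: "'k::field \<Rightarrow> 'a::ab_group_add \<Rightarrow> 'a" and s2 :: "'k \<Rightarrow> 'b::ring_1 \<Rightarrow> 'b"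
    and s3 :: "'k \<Rightarrow> 'c::ab_group_add \<Rightarrow> 'c" and act :: "'a \<Rightarrow> 'c \<Rightarrow> 'a"
  assumes vs: "vector_space s3" "vector_space s2"
    and act_lin: "\<forall>t. Vector_Spaces.linear s3 s1 (act t)"
    and mult_lin: "\<forall>g. Vector_Spaces.linear s2 s2 (\<lambda>h. g * h)"
    and eq: "tensor_eq2 s3 s2 x x'"
  shows "tensor_eq2 s1 s2 (tensor_mult act w x) (tensor_mult act w x')"
  unfolding tensor_eq2_def
proof (intro allI impI)
  fix \<beta> :: "'a \<Rightarrow> 'b \<Rightarrow> 'k"
  assume \<beta>: "bilinear_form s1 s2 \<beta>"
  define \<beta>' where "\<beta>' c d = sum_list (map (\<lambda>(t,h). \<beta> (act t c) (h * d)) w)" for c d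
  have "bilinear_form s3 s2 \<beta>'"
    unfolding bilinear_form_def \<beta>'_def
  proof (intro conjI allI)
    fix d
    show "Vector_Spaces.linear s3 (*) (\<lambda>c. sum_list (map (\<lambda>(t,h). \<beta> (act t c) (h * d)) w))"
      using linear_sum_list[OF vs(1), of w "\<lambda>(t,h) c. \<beta> (act t c) (h * d)"]
        linear_comp[OF act_lin[rule_format], of _ "\<lambda>v. \<beta> v _"] \<beta>
      by (auto simp: case_prod_unfold bilinear_form_def)
  next
    fix c
    show "Vector_Spaces.linear s2 (*) (\<lambda>d. sum_list (map (\<lambda>(t,h). \<beta> (act t c) (h * d)) w))"
      using linear_sum_list[OF vs(2), of w "\<lambda>(t,h) d. \<beta> (act t c) (h * d)"]
        linear_comp[OF mult_lin[rule_format], of _ "\<lambda>v. \<beta> _ v"] \<beta>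
      by (auto simp: case_prod_unfold bilinear_form_def)
  qed
  then show "sum_list (map (\<lambda>(a,b). \<beta> a b) (tensor_mult act w x)) =
             sum_list (map (\<lambda>(a,b). \<beta> a b) (tensor_mult act w x'))"
    using eq unfolding sum_tensor_mult_right tensor_eq2_def \<beta>'_def by blast
qed

lemma tensor_mult_assoc:
  fixes act :: "'a \<Rightarrow> 'c::semigroup_mult \<Rightarrow> 'a"
  assumes "\<forall>t c e. act (act t c) e = act t (c * e)"
  shows "tensor_mult act (tensor_mult act w a) (b :: ('c \<times> 'b::semigroup_mult) list)
       = tensor_mult act w (tensor_mult (*) a b)"
proof (induction w)
  case Nil
  then show ?case by (simp add: tensor_mult_def)
next
  case (Cons p w)
  have "tensor_mult act (map (\<lambda>(c,d). (act (fst p) c, snd p * d)) a) b =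
        map (\<lambda>(c,d). (act (fst p) c, snd p * d)) (tensor_mult (*) a b)"
    by (induction a) (auto simp: tensor_mult_def assms mult.assoc)
  then show ?case using Cons by (auto simp: tensor_mult_def case_prod_unfold)
qed

lemma tensor_mult_one_left: "tensor_mult (*) [(1::'a::monoid_mult, 1::'b::monoid_mult)] z = z"
  by (induction z) (auto simp: tensor_mult_def)

lemma module_units_differ_by_unit:
  assumes act_one: "\<forall>t. act t 1 = t"
    and act_assoc: "\<forall>t x y. act (act t x) y = act t (x * y)"
    and u0: "u0 \<in> module_units act" and u: "u \<in> module_units act"
  obtains x y where "act u0 x = u" "x * y = 1" "y * x = 1"
proof -
  have bij_u0: "bij (act u0)" and bij_u: "bij (act u)"
    using u0 u by (simp_all add: module_units_def)
  obtain x where x: "act u0 x = u" using bij_u0 by (metis bij_pointE)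
  obtain y where y: "act u y = u0" using bij_u by (metis bij_pointE)
  have "act u0 (x * y) = act u0 1" using act_assoc act_one x y by metis
  then have "x * y = 1" using bij_u0 by (auto dest: bij_is_inj injD)
  moreover have "act u (y * x) = act u 1" using act_assoc act_one x y by metis
  then have "y * x = 1" using bij_u by (auto dest: bij_is_inj injD)
  ultimately show thesis using x that by blast
qed

text \<open>The coaction of a comodule algebra is multiplicative and unital, so it maps
  mutually inverse elements of E to mutually inverse tensors in E \<otimes> H.\<close>
lemma comodule_algebra_inverse:
  assumes "comodule_algebra sH \<Delta> \<epsilon> sE \<Delta>E" and "x * y = 1"
  shows "tensor_eq2 sE sH (tensor_mult (*) (\<Delta>E x) (\<Delta>E y)) [(1, 1)]"
proof -
  have "tensor_eq2 sE sH (\<Delta>E (x * y)) (tensor_mult (*) (\<Delta>E x) (\<Delta>E y))"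
    and "tensor_eq2 sE sH (\<Delta>E 1) [(1, 1)]"
    using assms(1) by (auto simp: comodule_algebra_def)
  then show ?thesis using assms(2) by (metis tensor_eq2_sym tensor_eq2_trans)
qed

lemma right_module_tensor_mult_laws:
  fixes sE :: "'k::field \<Rightarrow> 'e::ring_1 \<Rightarrow> 'e" and sH :: "'k \<Rightarrow> 'h::ring_1 \<Rightarrow> 'h"
    and sT :: "'k \<Rightarrow> 't::ab_group_add \<Rightarrow> 't" and act :: "'t \<Rightarrow> 'e \<Rightarrow> 't"
  assumes module: "right_module sE sT act"
    and algE: "k_algebra sE" and algH: "k_algebra sH"
  shows "\<And>w w' z. tensor_eq2 sT sH w w'
      \<Longrightarrow> tensor_eq2 sT sH (tensor_mult act w z) (tensor_mult act w' z)"
    and "\<And>w z z'. tensor_eq2 sE sH z z'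
      \<Longrightarrow> tensor_eq2 sT sH (tensor_mult act w z) (tensor_mult act w z')"
    and "\<And>w w' z. tensor_eq2 sE sH w w'
      \<Longrightarrow> tensor_eq2 sE sH (tensor_mult (*) w z) (tensor_mult (*) w' z)"
    and "\<And>w z z'. tensor_eq2 sE sH z z'
      \<Longrightarrow> tensor_eq2 sE sH (tensor_mult (*) w z) (tensor_mult (*) w z')"
    and "\<And>w a b. tensor_mult act (tensor_mult act w a) b
      = tensor_mult act w (tensor_mult (*) a (b :: ('e \<times> 'h) list))"
    and "\<And>w a b. tensor_mult (*) (tensor_mult (*) w a) b
      = tensor_mult (*) w (tensor_mult (*) a (b :: ('e \<times> 'h) list))"
proof -
  have vE: "vector_space sE" and vH: "vector_space sH"
    using algE algH by (auto simp: k_algebra_def)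
  have vT: "vector_space sT" and act_lin_left: "\<forall>t. Vector_Spaces.linear sE sT (act t)"
    and act_lin_right: "\<forall>x. Vector_Spaces.linear sT sT (\<lambda>t. act t x)"
    and act_assoc: "\<forall>t x y. act (act t x) y = act t (x * y)"
    using module by (auto simp: right_module_def)
  note linH = k_algebra_mult_linear[OF algH] and linE = k_algebra_mult_linear[OF algE]
  show "\<And>w w' z. tensor_eq2 sT sH w w'
      \<Longrightarrow> tensor_eq2 sT sH (tensor_mult act w z) (tensor_mult act w' z)"
    by (rule tensor_mult_cong_left[OF vT vH act_lin_right]) (use linH in auto)
  show "\<And>w z z'. tensor_eq2 sE sH z z'
      \<Longrightarrow> tensor_eq2 sT sH (tensor_mult act w z) (tensor_mult act w z')"
    by (rule tensor_mult_cong_right[OF vE vH act_lin_left]) (use linH in auto)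
  show "\<And>w w' z. tensor_eq2 sE sH w w'
      \<Longrightarrow> tensor_eq2 sE sH (tensor_mult (*) w z) (tensor_mult (*) w' z)"
    by (rule tensor_mult_cong_left[OF vE vH]) (use linH linE in auto)
  show "\<And>w z z'. tensor_eq2 sE sH z z'
      \<Longrightarrow> tensor_eq2 sE sH (tensor_mult (*) w z) (tensor_mult (*) w z')"
    by (rule tensor_mult_cong_right[OF vE vH]) (use linH linE in auto)
  show "\<And>w a b. tensor_mult act (tensor_mult act w a) b
      = tensor_mult act w (tensor_mult (*) a (b :: ('e \<times> 'h) list))"
    by (rule tensor_mult_assoc) (use act_assoc in auto)
  show "\<And>w a b. tensor_mult (*) (tensor_mult (*) w a) b
      = tensor_mult (*) w (tensor_mult (*) a (b :: ('e \<times> 'h) list))"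
    by (rule tensor_mult_assoc) (auto simp: mult.assoc)
qed

text \<open>(T \<otimes> H)^\<times> is closed under right multiplication by units of E \<otimes> H:
  if \<vartheta>_W is bijective and X has the two-sided inverse Y, then \<vartheta>_{W X} is
  bijective, being \<vartheta>_W composed with the bijection z \<mapsto> X z.\<close>
lemma tensor_module_units_mult_unit:
  fixes sE :: "'k::field \<Rightarrow> 'e::ring_1 \<Rightarrow> 'e" and sH :: "'k \<Rightarrow> 'h::ring_1 \<Rightarrow> 'h"
    and sT :: "'k \<Rightarrow> 't::ab_group_add \<Rightarrow> 't" and act :: "'t \<Rightarrow> 'e \<Rightarrow> 't"
  assumes module: "right_module sE sT act"
    and algE: "k_algebra sE" and algH: "k_algebra sH"
    and W: "W \<in> tensor_module_units sE sH sT act"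
    and XY: "tensor_eq2 sE sH (tensor_mult (*) X Y) [(1, 1)]"
    and YX: "tensor_eq2 sE sH (tensor_mult (*) Y X) [(1, 1)]"
    and W': "tensor_eq2 sT sH W' (tensor_mult act W X)"
  shows "W' \<in> tensor_module_units sE sH sT act"
proof -
  note laws = right_module_tensor_mult_laws[OF module algE algH]
  note congT_left = laws(1) and congT_right = laws(2)
    and congE_left = laws(3) and congE_right = laws(4)
    and assocT = laws(5) and assocE = laws(6)
  have W'_mult: "\<And>z. tensor_eq2 sT sH (tensor_mult act W' z) (tensor_mult act W (tensor_mult (*) X z))"
    using congT_left[OF W'] assocT by metis
  have XY_cancel: "\<And>z. tensor_eq2 sE sH (tensor_mult (*) X (tensor_mult (*) Y z)) z"
    using congE_left[OF XY] assocE tensor_mult_one_left by metis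
  have YX_cancel: "\<And>z. tensor_eq2 sE sH (tensor_mult (*) Y (tensor_mult (*) X z)) z"
    using congE_left[OF YX] assocE tensor_mult_one_left by metis
  have W_surj: "\<forall>z. \<exists>p. tensor_eq2 sT sH (tensor_mult act W p) z"
    and W_inj: "\<forall>p q. tensor_eq2 sT sH (tensor_mult act W p) (tensor_mult act W q)
                  \<longrightarrow> tensor_eq2 sE sH p q"
    using W unfolding tensor_module_units_def by auto
  show ?thesis
    unfolding tensor_module_units_def
  proof (intro CollectI conjI allI impI)
    fix z
    obtain p where p: "tensor_eq2 sT sH (tensor_mult act W p) z" using W_surj by blast
    have "tensor_eq2 sT sH (tensor_mult act W (tensor_mult (*) X (tensor_mult (*) Y p)))
            (tensor_mult act W p)"
      using XY_cancel by (rule congT_right)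
    then show "\<exists>q. tensor_eq2 sT sH (tensor_mult act W' q) z"
      using W'_mult p by (meson tensor_eq2_trans)
  next
    fix p q
    assume "tensor_eq2 sT sH (tensor_mult act W' p) (tensor_mult act W' q)"
    then have "tensor_eq2 sT sH (tensor_mult act W (tensor_mult (*) X p))
                 (tensor_mult act W (tensor_mult (*) X q))"
      using W'_mult by (meson tensor_eq2_sym tensor_eq2_trans)
    then have "tensor_eq2 sE sH (tensor_mult (*) X p) (tensor_mult (*) X q)"
      using W_inj by blast
    then have "tensor_eq2 sE sH (tensor_mult (*) Y (tensor_mult (*) X p))
                 (tensor_mult (*) Y (tensor_mult (*) X q))"
      by (rule congE_right)
    then show "tensor_eq2 sE sH p q"
      using YX_cancel by (meson tensor_eq2_sym tensor_eq2_trans)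
  qed
qed

theorem lemma3p3:
  fixes sH :: "'k::field \<Rightarrow> 'h::ring_1 \<Rightarrow> 'h"
    and \<Delta> :: "'h \<Rightarrow> ('h \<times> 'h) list" and \<epsilon> :: "'h \<Rightarrow> 'k"
    and sE :: "'k \<Rightarrow> 'e::ring_1 \<Rightarrow> 'e" and \<Delta>E :: "'e \<Rightarrow> ('e \<times> 'h) list"
    and sT :: "'k \<Rightarrow> 't::ab_group_add \<Rightarrow> 't" and act :: "'t \<Rightarrow> 'e \<Rightarrow> 't"
    and \<Delta>T :: "'t \<Rightarrow> ('t \<times> 'h) list"
  assumes "hopf_algebra sH \<Delta> \<epsilon>"
    and "comodule_algebra sH \<Delta> \<epsilon> sE \<Delta>E"
    and "hopf_torsor sH \<Delta> \<epsilon> sE \<Delta>E sT act \<Delta>T"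
  shows "bullet_units sE sH sT act \<Delta>T = module_units act"
proof
  show "bullet_units sE sH sT act \<Delta>T \<subseteq> module_units act"
    by (auto simp: bullet_units_def)
  have algH: "k_algebra sH" using assms(1) by (simp add: hopf_algebra_def)
  have algE: "k_algebra sE" using assms(2) by (simp add: comodule_algebra_def)
  have module: "right_module sE sT act"
    and hopf_mod: "\<forall>t x. tensor_eq2 sT sH (\<Delta>T (act t x)) (tensor_mult act (\<Delta>T t) (\<Delta>E x))"
    using assms(3) by (auto simp: hopf_torsor_def hopf_module_def)
  obtain u0 where u0: "u0 \<in> module_units act" "\<Delta>T u0 \<in> tensor_module_units sE sH sT act"
    using assms(3) by (auto simp: hopf_torsor_def bullet_units_def)
  show "module_units act \<subseteq> bullet_units sE sH sT act \<Delta>T"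
  proof
    fix u assume u: "u \<in> module_units act"
    obtain x y where x: "act u0 x = u" and "x * y = 1" "y * x = 1"
      using module_units_differ_by_unit[OF _ _ u0(1) u] module
      by (auto simp: right_module_def)
    then have "\<Delta>T u \<in> tensor_module_units sE sH sT act"
      using tensor_module_units_mult_unit[OF module algE algH u0(2)]
        comodule_algebra_inverse[OF assms(2)] hopf_mod by blast
    then show "u \<in> bullet_units sE sH sT act \<Delta>T"
      using u by (simp add: bullet_units_def)
  qed
qed

end
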